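(* Let $k\ge1$, $n\ge0$, $j\ge0$ be integers. The number of $k$-Dyck prefixes with exactly $n+1$ up-steps, whose last step is an up-step, and which end at height $j+k$, equals $$\sum_{0\le m\le j/k}(-1)^m\binom{j-km}{m}\frac1{1+(n-m)(k+1)}\binom{1+(n-m)(k+1)}{n-m}\;-\;(-1)^n\binom{j-1-kn}{n}.$$
   Context: A $k$-Dyck prefix is a lattice path starting at $(0,0)$ with up-steps $(1,k)$ and down-steps $(1,-1)$ that never goes below the $x$-axis; the height of a point is its $y$-coordinate. Binomial conventions: $\binom{a}{b}=0$ if $b<0$; for $a\ge0$, $\binom{a}{b}=0$ if $b>a$; and the term $\binom{j-1-kn}{n}$ is taken to be $0$ when $j-1-kn<0$ (it is the coefficient of $z^nu^{j-1}$ in $1/(1-u+zu^{k+1})$). *)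

theory Defs
  imports Complex_Main
begin

text \<open>A path is a list of steps; True = up-step (1,k), False = down-step (1,-1).\<close>

definition path_height :: "nat \<Rightarrow> bool list \<Rightarrow> int" where
  "path_height k ws = (\<Sum>s\<leftarrow>ws. if s then int k else -1)"

definition is_k_dyck_prefix :: "nat \<Rightarrow> bool list \<Rightarrow> bool" where
  "is_k_dyck_prefix k ws \<longleftrightarrow> (\<forall>i\<le>length ws. path_height k (take i ws) \<ge> 0)"

definition num_up :: "bool list \<Rightarrow> nat" where
  "num_up ws = length (filter id ws)"

text \<open>Binomial coefficient with integer arguments following the paper's conventions:
  0 if the lower index is negative, 0 if the upper index is negative (only used where
  the paper declares such terms 0), and the usual value otherwise (0 when b > a).\<close>
definition ibinom :: "int \<Rightarrow> int \<Rightarrow> real" where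
  "ibinom a b = (if b < 0 \<or> a < 0 then 0 else real (nat a choose nat b))"

end

theory Submission
  imports Defs
begin

(* Let S(n, h) be the number of k-Dyck prefixes with n up-steps ending at height h. Removing the
   last step gives S(n + 1, h) = S(n + 1, h + 1) + S(n, h - k) for h >= 0, and S(0, h) = [h = 0].
   Appending a down-step to a prefix counted by S(n, 0) gives a Lukasiewicz word: height -1,
   all proper prefixes of height >= 0. By the cycle lemma every word with n up-steps and
   (k + 1) n + 1 steps is one of (k + 1) n + 1 distinct rotations of exactly one such word, so
   S(n, 0) is the Fuss-Catalan number. The closed formula satisfies the same recurrence in h
   (Pascal's rule termwise, the alternating signs absorbing the shift of m) and the same boundary
   values, so it equals S(n, h) by induction on n and h. The paths of the theorem are those
   counted by S(n, j) followed by one up-step. *)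

section \<open>Dyck prefixes and the last-step recurrence\<close>

lemma path_height_Nil [simp]: "path_height k [] = 0"
  by (simp add: path_height_def)

lemma path_height_Cons [simp]:
  "path_height k (s # ws) = (if s then int k else -1) + path_height k ws"
  by (simp add: path_height_def)

lemma path_height_append [simp]:
  "path_height k (xs @ ys) = path_height k xs + path_height k ys"
  by (simp add: path_height_def)

lemma num_up_Nil [simp]: "num_up [] = 0"
  by (simp add: num_up_def)

lemma num_up_Cons [simp]: "num_up (s # ws) = (if s then Suc (num_up ws) else num_up ws)"
  by (simp add: num_up_def)

lemma num_up_append [simp]: "num_up (xs @ ys) = num_up xs + num_up ys"
  by (simp add: num_up_def)

lemma path_height_eq: "path_height k ws = (int k + 1) * int (num_up ws) - int (length ws)"
  by (induction ws) (auto simp: algebra_simps)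

lemma is_k_dyck_prefix_Nil [simp]: "is_k_dyck_prefix k []"
  by (simp add: is_k_dyck_prefix_def)

lemma dyck_prefix_height_nonneg: "is_k_dyck_prefix k ws \<Longrightarrow> path_height k ws \<ge> 0"
  unfolding is_k_dyck_prefix_def by (metis order_refl take_all)

lemma is_k_dyck_prefix_snoc:
  "is_k_dyck_prefix k (ws @ [s]) \<longleftrightarrow> is_k_dyck_prefix k ws \<and> path_height k (ws @ [s]) \<ge> 0"
  unfolding is_k_dyck_prefix_def
  by (auto simp: le_Suc_eq)

definition dyck_prefixes :: "nat \<Rightarrow> nat \<Rightarrow> int \<Rightarrow> bool list set" where
  "dyck_prefixes k n h = {ws. is_k_dyck_prefix k ws \<and> num_up ws = n \<and> path_height k ws = h}"

lemma finite_dyck_prefixes: "finite (dyck_prefixes k n h)"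
proof -
  have "length ws \<le> (k + 1) * n" if "ws \<in> dyck_prefixes k n h" for ws
  proof -
    have "0 \<le> (int k + 1) * int n - int (length ws)"
      using that dyck_prefix_height_nonneg by (force simp: dyck_prefixes_def path_height_eq)
    then show ?thesis by (simp add: nat_int_comparison(3) algebra_simps)
  qed
  then show ?thesis
    by (intro finite_subset[OF _ finite_lists_length_le[of UNIV "(k + 1) * n"]]) auto
qed

lemma dyck_prefixes_neg: "h < 0 \<Longrightarrow> dyck_prefixes k n h = {}"
  using dyck_prefix_height_nonneg by (fastforce simp: dyck_prefixes_def)

lemma dyck_prefixes_0_up: "dyck_prefixes k 0 h = (if h = 0 then {[]} else {})"
proof -
  have "ws = []" if "is_k_dyck_prefix k ws" "num_up ws = 0" for ws
    using dyck_prefix_height_nonneg[OF that(1)] that(2) by (simp add: path_height_eq)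
  then show ?thesis by (auto simp: dyck_prefixes_def) (metis path_height_Nil)
qed

lemma dyck_prefixes_Suc_up:
  assumes "h \<ge> 0"
  shows "dyck_prefixes k (Suc n) h =
    (\<lambda>ws. ws @ [False]) ` dyck_prefixes k (Suc n) (h + 1) \<union>
    (\<lambda>ws. ws @ [True]) ` dyck_prefixes k n (h - int k)"
proof (intro equalityI subsetI)
  fix ws assume ws: "ws \<in> dyck_prefixes k (Suc n) h"
  then have "ws \<noteq> []" by (auto simp: dyck_prefixes_def)
  then obtain vs s where "ws = vs @ [s]" by (cases ws rule: rev_cases) auto
  with ws show "ws \<in> (\<lambda>ws. ws @ [False]) ` dyck_prefixes k (Suc n) (h + 1) \<union>
    (\<lambda>ws. ws @ [True]) ` dyck_prefixes k n (h - int k)"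
    by (cases s) (auto simp: dyck_prefixes_def is_k_dyck_prefix_snoc)
qed (use assms in \<open>auto simp: dyck_prefixes_def is_k_dyck_prefix_snoc\<close>)

lemma card_dyck_prefixes_Suc_up:
  assumes "h \<ge> 0"
  shows "card (dyck_prefixes k (Suc n) h) =
    card (dyck_prefixes k (Suc n) (h + 1)) + card (dyck_prefixes k n (h - int k))"
  unfolding dyck_prefixes_Suc_up[OF assms]
  by (subst card_Un_disjoint) (auto simp: finite_dyck_prefixes card_image inj_on_def)

section \<open>The cycle lemma\<close>

lemma card_bool_lists_num_up: "card {ws. length ws = m \<and> num_up ws = n} = m choose n"
proof (induction m arbitrary: n)
  case 0
  then show ?case by (cases n) (auto simp: Collect_conv_if)
next
  case (Suc m)
  have fin: "finite {ws :: bool list. length ws = m \<and> P ws}" for P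
    using finite_lists_length_eq[of "UNIV :: bool set" m] by (rule rev_finite_subset) auto
  have split: "{ws. length ws = Suc m \<and> num_up ws = n} =
      (#) False ` {ws. length ws = m \<and> num_up ws = n} \<union>
      (#) True ` {ws. length ws = m \<and> Suc (num_up ws) = n}"
    by (auto simp: length_Suc_conv split: if_splits)
  have "card {ws. length ws = Suc m \<and> num_up ws = n} =
      card {ws. length ws = m \<and> num_up ws = n} + card {ws. length ws = m \<and> Suc (num_up ws) = n}"
    unfolding split
    by (subst card_Un_disjoint) (auto simp: card_image fin)
  then show ?case
    by (cases n) (simp_all add: Suc.IH)
qed

lemma path_height_rotate [simp]: "path_height k (rotate r ws) = path_height k ws"
  by (metis rotate_drop_take append_take_drop_id path_height_append add.commute)

lemma num_up_rotate [simp]: "num_up (rotate r ws) = num_up ws"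
  by (metis rotate_drop_take append_take_drop_id num_up_append add.commute)

definition lukasiewicz_word :: "nat \<Rightarrow> bool list \<Rightarrow> bool" where
  "lukasiewicz_word k ws \<longleftrightarrow>
     path_height k ws = -1 \<and> (\<forall>i<length ws. path_height k (take i ws) \<ge> 0)"

lemma length_lukasiewicz_word:
  assumes "lukasiewicz_word k ws"
  shows "length ws = (k + 1) * num_up ws + 1"
proof -
  from assms have "int (length ws) = int ((k + 1) * num_up ws + 1)"
    by (simp add: lukasiewicz_word_def path_height_eq algebra_simps)
  then show ?thesis by (simp only: of_nat_eq_iff)
qed

lemma lukasiewicz_words_eq_image:
  "{ws. lukasiewicz_word k ws \<and> num_up ws = n} = (\<lambda>vs. vs @ [False]) ` dyck_prefixes k n 0"
proof (intro equalityI subsetI)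
  fix ws assume "ws \<in> {ws. lukasiewicz_word k ws \<and> num_up ws = n}"
  then have ws: "lukasiewicz_word k ws" "num_up ws = n" by auto
  then have "ws \<noteq> []" by (auto simp: lukasiewicz_word_def)
  then obtain vs s where ws_eq: "ws = vs @ [s]" by (cases ws rule: rev_cases) auto
  have prefix: "path_height k (take i vs) \<ge> 0" if "i \<le> length vs" for i
    using ws(1) that unfolding lukasiewicz_word_def ws_eq by (auto dest!: spec[of _ i])
  have "path_height k vs + (if s then int k else -1) = -1"
    using ws(1) by (simp add: lukasiewicz_word_def ws_eq)
  with prefix[of "length vs"] have "\<not> s" "path_height k vs = 0"
    by (auto split: if_splits)
  with prefix ws(2) show "ws \<in> (\<lambda>vs. vs @ [False]) ` dyck_prefixes k n 0"
    by (auto simp: ws_eq dyck_prefixes_def is_k_dyck_prefix_def)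
next
  fix ws assume "ws \<in> (\<lambda>vs. vs @ [False]) ` dyck_prefixes k n 0"
  then show "ws \<in> {ws. lukasiewicz_word k ws \<and> num_up ws = n}"
    by (auto simp: dyck_prefixes_def is_k_dyck_prefix_def lukasiewicz_word_def less_Suc_eq_le)
qed

lemma not_lukasiewicz_word_rotate:
  assumes ws: "lukasiewicz_word k ws" and r: "0 < r" "r < length ws"
  shows "\<not> lukasiewicz_word k (rotate r ws)"
proof
  assume rot: "lukasiewicz_word k (rotate r ws)"
  have "path_height k (take r ws) + path_height k (drop r ws) = -1"
    using ws by (metis append_take_drop_id path_height_append lukasiewicz_word_def)
  moreover have "path_height k (take r ws) \<ge> 0"
    using ws r by (simp add: lukasiewicz_word_def)
  moreover have "path_height k (take (length ws - r) (rotate r ws)) \<ge> 0"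
    using rot r by (simp add: lukasiewicz_word_def)
  ultimately show False
    using r by (simp add: rotate_drop_take)
qed

lemma exists_lukasiewicz_rotation:
  assumes s: "path_height k s = -1"
  shows "\<exists>ws i. lukasiewicz_word k ws \<and> i < length s \<and> s = rotate i ws"
proof -
  define L where "L = length s"
  define h where "h q = path_height k (take q s)" for q
  define \<mu> where "\<mu> = Min (h ` {..L})"
  have \<mu>_le: "\<mu> \<le> h q" if "q \<le> L" for q
    using that by (simp add: \<mu>_def)
  have "\<mu> \<in> h ` {..L}"
    unfolding \<mu>_def by (rule Min_in) auto
  then obtain q0 where q0: "q0 \<le> L" "h q0 = \<mu>" by auto
  \<comment> \<open>the rotation starts right after the first minimum of the prefix heights\<close>
  define p where "p = (LEAST q. h q = \<mu>)"
  have hp: "h p = \<mu>" and "p \<le> q0"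
    unfolding p_def using q0(2) by (fact LeastI, fact Least_le)
  then have "p \<le> L" using q0 by simp
  have \<mu>_less: "\<mu> < h q" if "q < p" for q
    using not_less_Least[OF that[unfolded p_def]] \<mu>_le[of q] that \<open>p \<le> L\<close> by simp
  have "\<mu> \<le> -1" using \<mu>_le[of L] s by (simp add: h_def L_def)
  then have "0 < p" using hp by (cases p) (auto simp: h_def)
  define ws where "ws = rotate p s"
  have ws_eq: "ws = drop p s @ take p s"
    using \<open>p \<le> L\<close> unfolding ws_def L_def
    by (metis append_take_drop_id length_take min_absorb2 rotate_append)
  have drop_height: "path_height k (drop p s) = -1 - \<mu>"
    using s hp by (metis append_take_drop_id path_height_append h_def add_diff_cancel_left')
  have "path_height k (take q ws) \<ge> 0" if "q < L" for q
  proof (cases "q \<le> L - p")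
    case True
    then have "h (p + q) = \<mu> + path_height k (take q ws)"
      using hp by (simp add: h_def ws_eq take_add L_def)
    with \<mu>_le[of "p + q"] True \<open>p \<le> L\<close> show ?thesis by simp
  next
    case False
    then have "path_height k (take q ws) = -1 - \<mu> + h (q - (L - p))"
      using drop_height \<open>p \<le> L\<close> that by (simp add: h_def ws_eq L_def min_absorb1)
    moreover have "q - (L - p) < p" using False that by simp
    ultimately show ?thesis using \<mu>_less by fastforce
  qed
  then have "lukasiewicz_word k ws"
    using s by (simp add: lukasiewicz_word_def ws_def L_def)
  moreover have "s = rotate (L - p) ws"
    using \<open>p \<le> L\<close> by (simp add: ws_def rotate_rotate L_def)
  ultimately show ?thesis
    using \<open>0 < p\<close> \<open>p \<le> L\<close> L_def by (intro exI[of _ ws] exI[of _ "L - p"]) simp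
qed

lemma rotate_lukasiewicz_word_inj:
  assumes ws: "lukasiewicz_word k ws" and ws': "lukasiewicz_word k ws'"
    and len: "length ws' = length ws" and i: "i < length ws" "i' < length ws"
    and eq: "rotate i ws = rotate i' ws'"
  shows "ws' = ws \<and> i' = i"
proof -
  let ?L = "length ws" and ?d = "(length ws - i' + i) mod length ws"
  have "ws' = rotate (?L - i') (rotate i' ws')"
    using i len by (simp add: rotate_rotate)
  also have "\<dots> = rotate (?L - i') (rotate i ws)"
    by (simp only: eq)
  also have "\<dots> = rotate ?d ws"
    by (simp add: rotate_rotate flip: rotate_conv_mod)
  finally have ws'_eq: "ws' = rotate ?d ws" .
  have "?d = 0"
  proof (rule ccontr)
    assume "?d \<noteq> 0"
    then have "\<not> lukasiewicz_word k (rotate ?d ws)"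
      using i by (intro not_lukasiewicz_word_rotate[OF ws]) (auto intro: mod_less_divisor)
    with ws' ws'_eq show False by simp
  qed
  moreover have "i' = i"
  proof (cases "i' \<le> i")
    case True
    then have "?L - i' + i = (i - i') + ?L" using i by simp
    with \<open>?d = 0\<close> have "(i - i') mod ?L = 0" by simp
    with True i show ?thesis by simp
  next
    case False
    then have "?L - i' + i < ?L" "0 < ?L - i' + i" using i by auto
    with \<open>?d = 0\<close> show ?thesis by simp
  qed
  ultimately show ?thesis
    using ws'_eq by simp
qed

theorem cycle_lemma:
  "card {s. length s = (k + 1) * n + 1 \<and> num_up s = n} =
   card {ws. lukasiewicz_word k ws \<and> num_up ws = n} * ((k + 1) * n + 1)"
proof -
  let ?L = "(k + 1) * n + 1" and ?W = "{ws. lukasiewicz_word k ws \<and> num_up ws = n}"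
  let ?rot = "\<lambda>(ws, i). rotate i ws"
  have inj: "inj_on ?rot (?W \<times> {..<?L})"
  proof (rule inj_onI)
    fix x y assume "x \<in> ?W \<times> {..<?L}" "y \<in> ?W \<times> {..<?L}" "?rot x = ?rot y"
    moreover obtain ws i ws' i' where "x = (ws, i)" "y = (ws', i')" by fastforce
    ultimately show "x = y"
      using rotate_lukasiewicz_word_inj[of k ws' ws i' i] length_lukasiewicz_word[of k] by auto
  qed
  have image: "?rot ` (?W \<times> {..<?L}) = {s. length s = ?L \<and> num_up s = n}"
  proof (intro equalityI subsetI)
    fix s assume "s \<in> ?rot ` (?W \<times> {..<?L})"
    then show "s \<in> {s. length s = ?L \<and> num_up s = n}"
      using length_lukasiewicz_word by auto
  next
    fix s assume s: "s \<in> {s. length s = ?L \<and> num_up s = n}"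
    then have "path_height k s = -1" by (simp add: path_height_eq algebra_simps)
    then obtain ws i where "lukasiewicz_word k ws" "i < length s" "s = rotate i ws"
      using exists_lukasiewicz_rotation by blast
    with s show "s \<in> ?rot ` (?W \<times> {..<?L})"
      by (intro rev_image_eqI[of "(ws, i)"]) auto
  qed
  show ?thesis
    using card_image[OF inj] unfolding image by (simp add: card_cartesian_product)
qed

corollary card_dyck_prefixes_height_0:
  "card (dyck_prefixes k n 0) * ((k + 1) * n + 1) = ((k + 1) * n + 1) choose n"
proof -
  have "card (dyck_prefixes k n 0) = card {ws. lukasiewicz_word k ws \<and> num_up ws = n}"
    unfolding lukasiewicz_words_eq_image by (simp add: card_image inj_on_def)
  then show ?thesis
    using cycle_lemma[of k n] card_bool_lists_num_up by simp
qed

section \<open>The closed formula\<close>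

lemma ibinom_neg_upper: "a < 0 \<Longrightarrow> ibinom a b = 0"
  by (simp add: ibinom_def)

lemma ibinom_neg_lower: "b < 0 \<Longrightarrow> ibinom a b = 0"
  by (simp add: ibinom_def)

lemma ibinom_0_lower: "ibinom a 0 = of_bool (a \<ge> 0)"
  by (simp add: ibinom_def)

lemma ibinom_of_nat: "ibinom (int a) (int b) = a choose b"
  by (simp add: ibinom_def)

lemma ibinom_Suc_Suc: "ibinom (a + 1) (int (Suc m)) = ibinom a (int m) + ibinom a (int (Suc m))"
proof (cases "a \<ge> 0")
  case True
  then have "nat (a + 1) = Suc (nat a)" by simp
  with True show ?thesis
    unfolding ibinom_def nat_int by (simp del: of_nat_Suc)
next
  case False
  then show ?thesis by (cases "a = -1") (auto simp: ibinom_def)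
qed

lemma alternating_ibinom_diff:
  "(-1) ^ Suc m * ibinom a (int (Suc m)) - (-1) ^ Suc m * ibinom (a + 1) (int (Suc m)) =
   (-1) ^ m * ibinom a (int m)"
  unfolding ibinom_Suc_Suc by (simp add: algebra_simps del: of_nat_Suc)

definition fuss_catalan :: "nat \<Rightarrow> int \<Rightarrow> real" where
  "fuss_catalan k d = 1 / of_int (1 + d * (int k + 1)) * ibinom (1 + d * (int k + 1)) d"

lemma fuss_catalan_neg: "d < 0 \<Longrightarrow> fuss_catalan k d = 0"
  by (simp add: fuss_catalan_def ibinom_neg_lower)

lemma fuss_catalan_0: "fuss_catalan k 0 = 1"
  by (simp add: fuss_catalan_def ibinom_def)

lemma real_card_dyck_prefixes_height_0: "real (card (dyck_prefixes k n 0)) = fuss_catalan k (int n)"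
proof -
  let ?N = "(k + 1) * n + 1"
  have N: "1 + int n * (int k + 1) = int ?N" by (simp add: algebra_simps)
  have "real (card (dyck_prefixes k n 0)) = real (?N choose n) / real ?N"
    unfolding card_dyck_prefixes_height_0[symmetric] of_nat_mult
    by (rule nonzero_mult_div_cancel_right[symmetric]) (simp only: of_nat_eq_0_iff)
  also have "\<dots> = fuss_catalan k (int n)"
    unfolding fuss_catalan_def N ibinom_of_nat of_int_of_nat_eq by simp
  finally show ?thesis .
qed

definition fuss_catalan_alt_sum :: "nat \<Rightarrow> nat \<Rightarrow> int \<Rightarrow> real" where
  "fuss_catalan_alt_sum k n j =
     (\<Sum>m\<in>{0..nat j}. (-1) ^ m * ibinom (j - int k * int m) (int m) * fuss_catalan k (int n - int m))"

definition dyck_formula :: "nat \<Rightarrow> nat \<Rightarrow> int \<Rightarrow> real" where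
  "dyck_formula k n j = fuss_catalan_alt_sum k n j - (-1) ^ n * ibinom (j - 1 - int k * int n) (int n)"

lemma fuss_catalan_alt_sum_upto:
  assumes "k \<ge> 1" "nat j \<le> M"
  shows "fuss_catalan_alt_sum k n j =
    (\<Sum>m\<in>{0..M}. (-1) ^ m * ibinom (j - int k * int m) (int m) * fuss_catalan k (int n - int m))"
proof -
  have "ibinom (j - int k * int m) (int m) = 0" if "nat j < m" for m
  proof (rule ibinom_neg_upper)
    have "int m \<le> int k * int m" using mult_right_mono[of 1 "int k" "int m"] assms(1) by simp
    with that show "j - int k * int m < 0" by linarith
  qed
  then show ?thesis
    unfolding fuss_catalan_alt_sum_def by (intro sum.mono_neutral_left) (use assms in auto)
qed

lemma fuss_catalan_alt_sum_diff:
  assumes k: "k \<ge> 1" and j: "j \<ge> 0"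
  shows "fuss_catalan_alt_sum k (Suc n) j - fuss_catalan_alt_sum k (Suc n) (j + 1) =
    fuss_catalan_alt_sum k n (j - int k)"
proof -
  define t where "t j m = (-1) ^ m * ibinom (j - int k * int m) (int m) *
    fuss_catalan k (int (Suc n) - int m)" for j m
  have shift: "t j (Suc i) - t (j + 1) (Suc i) =
      (-1) ^ i * ibinom (j - int k - int k * int i) (int i) * fuss_catalan k (int n - int i)" for i
  proof -
    define a where "a = j - int k * int (Suc i)"
    have a1: "j + 1 - int k * int (Suc i) = a + 1" and a2: "j - int k - int k * int i = a"
      and n1: "int (Suc n) - int (Suc i) = int n - int i"
      by (simp_all add: a_def algebra_simps)
    have "t j (Suc i) - t (j + 1) (Suc i) = ((-1) ^ Suc i * ibinom a (int (Suc i)) -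
        (-1) ^ Suc i * ibinom (a + 1) (int (Suc i))) * fuss_catalan k (int n - int i)"
      unfolding t_def a1 n1 a_def[symmetric] by (simp only: left_diff_distrib)
    then show ?thesis
      unfolding alternating_ibinom_diff a2 .
  qed
  have upto: "fuss_catalan_alt_sum k (Suc n) j' = (\<Sum>m\<in>{0..Suc (nat j)}. t j' m)"
    if "j' \<in> {j, j + 1}" for j'
    using that j unfolding t_def by (intro fuss_catalan_alt_sum_upto[OF k]) auto
  have "fuss_catalan_alt_sum k (Suc n) j - fuss_catalan_alt_sum k (Suc n) (j + 1) =
      (\<Sum>m\<in>{0..Suc (nat j)}. t j m - t (j + 1) m)"
    by (simp add: upto sum_subtractf)
  also have "\<dots> = (t j 0 - t (j + 1) 0) + (\<Sum>i\<in>{0..nat j}. t j (Suc i) - t (j + 1) (Suc i))"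
    by (simp only: sum.atLeast0_atMost_Suc_shift comp_def)
  also have "t j 0 - t (j + 1) 0 = 0"
    using j by (simp add: t_def ibinom_0_lower)
  also have "0 + (\<Sum>i\<in>{0..nat j}. t j (Suc i) - t (j + 1) (Suc i)) =
      fuss_catalan_alt_sum k n (j - int k)"
    unfolding shift add_0 by (rule fuss_catalan_alt_sum_upto[OF k, symmetric]) simp
  finally show ?thesis .
qed

lemma dyck_formula_Suc_up:
  assumes "k \<ge> 1" "j \<ge> 0"
  shows "dyck_formula k (Suc n) j - dyck_formula k (Suc n) (j + 1) = dyck_formula k n (j - int k)"
proof -
  define c where "c = j - 1 - int k * int (Suc n)"
  have "j + 1 - 1 - int k * int (Suc n) = c + 1" "j - int k - 1 - int k * int n = c"
    by (simp_all add: c_def algebra_simps)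
  then show ?thesis
    using fuss_catalan_alt_sum_diff[OF assms, of n] alternating_ibinom_diff[of n c]
    unfolding dyck_formula_def c_def[symmetric] by (simp add: algebra_simps)
qed

lemma dyck_formula_0_up: "dyck_formula k 0 j = of_bool (j = 0)"
proof -
  have "fuss_catalan_alt_sum k 0 j =
      (\<Sum>m\<in>{0}. (-1) ^ m * ibinom (j - int k * int m) (int m) * fuss_catalan k (int 0 - int m))"
    unfolding fuss_catalan_alt_sum_def by (rule sum.mono_neutral_right) (auto simp: fuss_catalan_neg)
  then show ?thesis
    by (simp add: dyck_formula_def fuss_catalan_0 ibinom_0_lower)
qed

lemma dyck_formula_nonpos:
  assumes "j \<le> 0"
  shows "dyck_formula k n j = of_bool (j = 0) * fuss_catalan k (int n)"
proof -
  have "j - 1 - int k * int n < 0"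
    using assms mult_nonneg_nonneg[of "int k" "int n"] by linarith
  with assms show ?thesis
    by (auto simp: dyck_formula_def fuss_catalan_alt_sum_def ibinom_0_lower ibinom_neg_upper)
qed

lemma fuss_catalan_alt_sum_of_nat:
  assumes "k \<ge> 1"
  shows "fuss_catalan_alt_sum k n (int j) =
    (\<Sum>m\<in>{0..j div k}. (-1) ^ m * ibinom (int j - int k * int m) (int m) * fuss_catalan k (int n - int m))"
  unfolding fuss_catalan_alt_sum_def nat_int
proof (rule sum.mono_neutral_right)
  show "{0..j div k} \<subseteq> {0..j}" by (simp add: div_le_dividend)
  have "ibinom (int j - int k * int m) (int m) = 0" if "j div k < m" for m
  proof -
    have "j < k * m" using that assms by (simp add: div_less_iff_less_mult mult.commute)
    then show ?thesis by (simp add: ibinom_neg_upper flip: of_nat_mult)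
  qed
  then show "\<forall>m\<in>{0..j} - {0..j div k}.
      (-1) ^ m * ibinom (int j - int k * int m) (int m) * fuss_catalan k (int n - int m) = 0"
    by auto
qed simp

theorem card_dyck_prefixes:
  assumes "k \<ge> 1"
  shows "real (card (dyck_prefixes k n h)) = dyck_formula k n h"
proof (induction n arbitrary: h)
  case 0
  show ?case by (simp add: dyck_prefixes_0_up dyck_formula_0_up)
next
  case (Suc n)
  show ?case
  proof (cases "h < 0")
    case True
    then show ?thesis by (simp add: dyck_prefixes_neg dyck_formula_nonpos)
  next
    case False
    then have "0 \<le> h" by simp
    then show ?thesis
    proof (induction h rule: int_ge_induct)
      case base
      show ?case by (simp add: dyck_formula_nonpos real_card_dyck_prefixes_height_0)
    next
      case (step h)
      have "real (card (dyck_prefixes k (Suc n) (h + 1))) =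
          real (card (dyck_prefixes k (Suc n) h)) - real (card (dyck_prefixes k n (h - int k)))"
        using card_dyck_prefixes_Suc_up[OF step.hyps(1)] by simp
      also have "\<dots> = dyck_formula k (Suc n) h - dyck_formula k n (h - int k)"
        using step.IH Suc.IH by simp
      also have "\<dots> = dyck_formula k (Suc n) (h + 1)"
        using dyck_formula_Suc_up[OF assms step.hyps(1), of n] by simp
      finally show ?case .
    qed
  qed
qed

lemma dyck_prefixes_ending_with_up:
  "{ws. is_k_dyck_prefix k ws \<and> num_up ws = n + 1 \<and> ws \<noteq> [] \<and> last ws
        \<and> path_height k ws = h + int k} = (\<lambda>vs. vs @ [True]) ` dyck_prefixes k n h"
  (is "?L = ?R")
proof (intro equalityI subsetI)
  fix ws assume "ws \<in> ?L"
  then have ws: "is_k_dyck_prefix k ws" "num_up ws = n + 1" "ws \<noteq> []" "last ws"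
    "path_height k ws = h + int k" by auto
  then obtain vs where vs: "ws = vs @ [True]"
    by (metis append_butlast_last_id)
  with ws have "vs \<in> dyck_prefixes k n h"
    by (auto simp: dyck_prefixes_def is_k_dyck_prefix_snoc)
  with vs show "ws \<in> ?R"
    by (simp only: image_eqI)
next
  fix ws assume "ws \<in> ?R"
  then obtain vs where "vs \<in> dyck_prefixes k n h" "ws = vs @ [True]" by blast
  then show "ws \<in> ?L"
    using dyck_prefix_height_nonneg[of k vs] by (auto simp: dyck_prefixes_def is_k_dyck_prefix_snoc)
qed

theorem mainTheorem3:
  fixes k n j :: nat
  assumes "k \<ge> 1"
  shows "real (card {ws. is_k_dyck_prefix k ws \<and> num_up ws = n + 1 \<and> ws \<noteq> [] \<and> last ws
                 \<and> path_height k ws = int j + int k})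
       = (\<Sum>m\<in>{0..j div k}.
            (-1) ^ m * ibinom (int j - int k * int m) (int m)
            * (1 / (1 + (int n - int m) * (int k + 1)))
            * ibinom (1 + (int n - int m) * (int k + 1)) (int n - int m))
         - (-1) ^ n * ibinom (int j - 1 - int k * int n) (int n)"
proof -
  have "real (card {ws. is_k_dyck_prefix k ws \<and> num_up ws = n + 1 \<and> ws \<noteq> [] \<and> last ws
                 \<and> path_height k ws = int j + int k}) = dyck_formula k n (int j)"
    unfolding dyck_prefixes_ending_with_up
    by (simp add: card_image inj_on_def card_dyck_prefixes[OF assms])
  also have "\<dots> = (\<Sum>m\<in>{0..j div k}.
            (-1) ^ m * ibinom (int j - int k * int m) (int m)
            * (1 / (1 + (int n - int m) * (int k + 1)))
            * ibinom (1 + (int n - int m) * (int k + 1)) (int n - int m))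
         - (-1) ^ n * ibinom (int j - 1 - int k * int n) (int n)"
    unfolding dyck_formula_def fuss_catalan_alt_sum_of_nat[OF assms] fuss_catalan_def
    by (simp only: mult.assoc)
  finally show ?thesis .
qed

end
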